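(* For any $a,b,c,d\in\{0,1,2,3\}$, the set $\{\ket{\psi_{a0}},\ket{\psi_{b1}},\ket{\psi_{c2}},\ket{\psi_{d3}}\}$ of generalized Bell states in $\mathbb{C}^4\otimes\mathbb{C}^4$ can be perfectly discriminated by one-way LOCC using only projective measurements. Similarly, for any $a,b,c,d\in\{0,1,2,3\}$, the set $\{\ket{\psi_{0a}},\ket{\psi_{1b}},\ket{\psi_{2c}},\ket{\psi_{3d}}\}$ can be perfectly discriminated by one-way LOCC using only projective measurements.
   Context: Generalized Bell states in $\mathbb{C}^4\otimes\mathbb{C}^4$ (Alice holds the first factor, Bob the second): $\ket{\psi_{nm}}=\frac12\sum_{j=0}^{3}e^{2\pi i jn/4}\ket{j}_A\ket{j\oplus_4 m}_B$ for $n,m\in\{0,1,2,3\}$, where $j\oplus_4 m=(j+m)\bmod 4$ and $\{\ket{j}\}$ are standard bases. Perfect discrimination by one-way LOCC using only projective measurements means: one party performs a projective measurement on her subsystem, communicates the outcome classically, and the other party then performs a projective measurement (depending on that outcome) whose result identifies with certainty which state of the set was shared. *)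

theory Defs
  imports Complex_Main
begin

text \<open>Operators on \<open>C^4\<close> are represented as \<open>nat \<Rightarrow> nat \<Rightarrow> complex\<close>
  (only entries with indices < 4 matter).  A vector of \<open>C^4 \<otimes> C^4\<close> is
  \<open>nat \<Rightarrow> nat \<Rightarrow> complex\<close>, where \<open>v j k\<close> is the coefficient of \<open>|j>_A |k>_B\<close>.\<close>

type_synonym cmat4 = "nat \<Rightarrow> nat \<Rightarrow> complex"
type_synonym bivec = "nat \<Rightarrow> nat \<Rightarrow> complex"

definition mmul4 :: "cmat4 \<Rightarrow> cmat4 \<Rightarrow> cmat4" where
  "mmul4 A B = (\<lambda>i k. \<Sum>j<4. A i j * B j k)"

definition is_projector4 :: "cmat4 \<Rightarrow> bool" where
  "is_projector4 P \<longleftrightarrow>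
     (\<forall>i<4. \<forall>j<4. P j i = cnj (P i j)) \<and>
     (\<forall>i<4. \<forall>k<4. mmul4 P P i k = P i k)"

definition proj_meas4 :: "nat set \<Rightarrow> (nat \<Rightarrow> cmat4) \<Rightarrow> bool" where
  "proj_meas4 I P \<longleftrightarrow> finite I \<and> (\<forall>x\<in>I. is_projector4 (P x)) \<and>
     (\<forall>i<4. \<forall>k<4. (\<Sum>x\<in>I. P x i k) = (if i = k then 1 else 0))"

text \<open>Expectation \<open><v| PA \<otimes> PB |v>\<close> (outcome probability for a local product measurement).\<close>
definition prob_AB :: "cmat4 \<Rightarrow> cmat4 \<Rightarrow> bivec \<Rightarrow> complex" where
  "prob_AB PA PB v = (\<Sum>j<4. \<Sum>k<4. \<Sum>j'<4. \<Sum>k'<4.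
      cnj (v j k) * PA j j' * PB k k' * v j' k')"

definition oneway_A_to_B :: "bivec set \<Rightarrow> bool" where
  "oneway_A_to_B S \<longleftrightarrow> (\<exists>I P. proj_meas4 I P \<and> (\<forall>x\<in>I. \<exists>J Q. proj_meas4 J Q \<and>
      (\<forall>y\<in>J. \<forall>u\<in>S. \<forall>w\<in>S.
         prob_AB (P x) (Q y) u \<noteq> 0 \<longrightarrow> prob_AB (P x) (Q y) w \<noteq> 0 \<longrightarrow> u = w)))"

definition oneway_B_to_A :: "bivec set \<Rightarrow> bool" where
  "oneway_B_to_A S \<longleftrightarrow> (\<exists>I P. proj_meas4 I P \<and> (\<forall>x\<in>I. \<exists>J Q. proj_meas4 J Q \<and>
      (\<forall>y\<in>J. \<forall>u\<in>S. \<forall>w\<in>S.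
         prob_AB (Q y) (P x) u \<noteq> 0 \<longrightarrow> prob_AB (Q y) (P x) w \<noteq> 0 \<longrightarrow> u = w)))"

definition oneway_proj_LOCC_discr :: "bivec set \<Rightarrow> bool" where
  "oneway_proj_LOCC_discr S \<longleftrightarrow> oneway_A_to_B S \<or> oneway_B_to_A S"

definition bell :: "nat \<Rightarrow> nat \<Rightarrow> bivec" where
  "bell n m = (\<lambda>j k. if j < 4 \<and> k = (j + m) mod 4
      then exp (2 * pi * \<i> * of_nat (j * n) / 4) / 2 else 0)"

end

theory Submission
  imports Defs "HOL-Number_Theory.Cong"
begin

text \<open>Measuring both halves in a product basis \<open>{\<alpha>_x \<otimes> \<beta>_y}\<close> is a one-way protocol whose
  outcome \<open>(x, y)\<close> has probability \<open>|\<langle>\<alpha>_x \<otimes> \<beta>_y | \<psi>\<rangle>|^2\<close>; it discriminates a set of states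
  as soon as no outcome has nonzero amplitude for two of them. In the computational basis
  \<open>\<psi>_{nm}\<close> can only give \<open>y = x + m mod 4\<close>, so the outcome reveals \<open>m\<close>. In the Fourier basis
  \<open>\<alpha>_x(j) = \<i>^(x j) / 2\<close> the amplitude of \<open>\<psi>_{nm}\<close> is proportional to the character sum
  \<open>\<Sum>_j \<i>^(j (n - x - y))\<close>, which vanishes unless \<open>n = x + y mod 4\<close>, so the outcome reveals \<open>n\<close>.\<close>

lemma add_mod_eq_cancel_left:
  fixes m m' t q :: nat
  assumes "m < q" "m' < q" "(t + m) mod q = (t + m') mod q"
  shows "m = m'"
  using assms cong_less_imp_eq_nat[of m q m'] cong_add_lcancel_nat[of t m m' q]
  unfolding cong_def by simp

lemma i_power_mod4: "\<i> ^ (k mod 4) = \<i> ^ k"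
proof -
  have "\<i> ^ k = (\<i> ^ 4) ^ (k div 4) * \<i> ^ (k mod 4)"
    by (metis div_mult_mod_eq power_add power_mult mult.commute)
  then show ?thesis by simp
qed

lemma i_power_eq_1_iff: "\<i> ^ k = 1 \<longleftrightarrow> 4 dvd k"
proof -
  have "k mod 4 < 4" by simp
  then consider "k mod 4 = 0" | "k mod 4 = 1" | "k mod 4 = 2" | "k mod 4 = 3" by linarith
  then have "\<i> ^ (k mod 4) = 1 \<longleftrightarrow> k mod 4 = 0"
    by cases (simp_all add: power3_eq_cube complex_eq_iff)
  then show ?thesis by (simp add: i_power_mod4 dvd_eq_mod_eq_0)
qed

lemma minus_i_power: "(- \<i>) ^ k = \<i> ^ (3 * k)"
proof -
  have "- \<i> = \<i> ^ 3" by (simp add: power3_eq_cube)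
  then show ?thesis by (simp only: power_mult)
qed

lemma sum_i_power_mult: "(\<Sum>j<4. \<i> ^ (j * k)) = (if 4 dvd k then 4 else 0)"
proof -
  have "(\<Sum>j<4. \<i> ^ (j * k)) = (\<Sum>j<4. (\<i> ^ k) ^ j)"
    by (metis power_mult mult.commute)
  also have "\<dots> = (if 4 dvd k then 4 else 0)"
  proof -
    have "(\<i> ^ k) ^ 4 = 1"
      by (metis i_power_eq_1_iff dvd_triv_left power_mult mult.commute)
    then show ?thesis by (simp add: sum_gp_strict i_power_eq_1_iff)
  qed
  finally show ?thesis .
qed

lemma exp_eq_i_power: "exp (2 * pi * \<i> * of_nat k / 4) = \<i> ^ k"
proof -
  have "2 * pi * \<i> * of_nat k / 4 = of_nat k * (\<i> * of_real (pi / 2))"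
    by (simp add: field_simps)
  moreover have "exp (\<i> * of_real (pi / 2)) = \<i>"
    by (metis cis_pi_half cis_conv_exp)
  ultimately show ?thesis by (metis exp_of_nat_mult)
qed

lemma bell_eq_i_power:
  "bell n m = (\<lambda>j k. if j < 4 \<and> k = (j + m) mod 4 then \<i> ^ (j * n) / 2 else 0)"
  unfolding bell_def by (simp only: exp_eq_i_power)

lemma bell_nonzero_imp_shift: "bell n m j k \<noteq> 0 \<Longrightarrow> k = (j + m) mod 4"
  by (simp add: bell_def split: if_splits)

definition ketbra :: "(nat \<Rightarrow> complex) \<Rightarrow> cmat4" where
  "ketbra \<alpha> = (\<lambda>j j'. \<alpha> j * cnj (\<alpha> j'))"

definition amplitude :: "(nat \<Rightarrow> complex) \<Rightarrow> (nat \<Rightarrow> complex) \<Rightarrow> bivec \<Rightarrow> complex" where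
  "amplitude \<alpha> \<beta> v = (\<Sum>j<4. \<Sum>k<4. cnj (\<alpha> j) * cnj (\<beta> k) * v j k)"

lemma prob_AB_ketbra:
  "prob_AB (ketbra \<alpha>) (ketbra \<beta>) v = cnj (amplitude \<alpha> \<beta> v) * amplitude \<alpha> \<beta> v"
proof -
  have "prob_AB (ketbra \<alpha>) (ketbra \<beta>) v = (\<Sum>j<4. \<Sum>k<4. \<Sum>j'<4. \<Sum>k'<4.
     (cnj (v j k) * \<alpha> j * \<beta> k) * (cnj (\<alpha> j') * cnj (\<beta> k') * v j' k'))"
    unfolding prob_AB_def ketbra_def by (intro sum.cong refl) (simp only: mult_ac)
  also have "\<dots> = (\<Sum>j<4. \<Sum>k<4. cnj (v j k) * \<alpha> j * \<beta> k) * amplitude \<alpha> \<beta> v"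
    unfolding amplitude_def by (simp only: sum_distrib_right, simp only: sum_distrib_left)
  also have "\<dots> = cnj (amplitude \<alpha> \<beta> v) * amplitude \<alpha> \<beta> v"
    unfolding amplitude_def by (simp add: cnj_sum mult_ac)
  finally show ?thesis .
qed

lemma prob_AB_ketbra_eq_0_iff:
  "prob_AB (ketbra \<alpha>) (ketbra \<beta>) v = 0 \<longleftrightarrow> amplitude \<alpha> \<beta> v = 0"
  by (simp add: prob_AB_ketbra)

lemma is_projector4_ketbra:
  assumes "(\<Sum>j<4. cnj (\<alpha> j) * \<alpha> j) = 1"
  shows "is_projector4 (ketbra \<alpha>)"
proof -
  have "mmul4 (ketbra \<alpha>) (ketbra \<alpha>) i k = \<alpha> i * cnj (\<alpha> k) * (\<Sum>j<4. cnj (\<alpha> j) * \<alpha> j)"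
    for i k
    unfolding mmul4_def ketbra_def by (simp add: sum_distrib_left mult_ac)
  with assms show ?thesis
    unfolding is_projector4_def by (simp add: ketbra_def)
qed

lemma proj_meas4_ketbra:
  assumes "finite I"
    and "\<And>x. x \<in> I \<Longrightarrow> (\<Sum>j<4. cnj (f x j) * f x j) = 1"
    and "\<And>i k. i < 4 \<Longrightarrow> k < 4 \<Longrightarrow> (\<Sum>x\<in>I. f x i * cnj (f x k)) = (if i = k then 1 else 0)"
  shows "proj_meas4 I (\<lambda>x. ketbra (f x))"
  using assms is_projector4_ketbra unfolding proj_meas4_def by (auto simp: ketbra_def)

lemma oneway_A_to_B_product_measurement:
  assumes "proj_meas4 I (\<lambda>x. ketbra (f x))" and "proj_meas4 J (\<lambda>y. ketbra (g y))"
    and "\<And>x y u v. x \<in> I \<Longrightarrow> y \<in> J \<Longrightarrow> u \<in> S \<Longrightarrow> v \<in> S \<Longrightarrow>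
      amplitude (f x) (g y) u \<noteq> 0 \<Longrightarrow> amplitude (f x) (g y) v \<noteq> 0 \<Longrightarrow> u = v"
  shows "oneway_A_to_B S"
proof -
  have "\<exists>J Q. proj_meas4 J Q \<and> (\<forall>y\<in>J. \<forall>u\<in>S. \<forall>w\<in>S.
      prob_AB (ketbra (f x)) (Q y) u \<noteq> 0 \<longrightarrow> prob_AB (ketbra (f x)) (Q y) w \<noteq> 0 \<longrightarrow> u = w)"
    if "x \<in> I" for x
    using assms(2,3) that
    by (intro exI[of _ J] exI[of _ "\<lambda>y. ketbra (g y)"]) (simp add: prob_AB_ketbra_eq_0_iff)
  with assms(1) show ?thesis
    unfolding oneway_A_to_B_def by blast
qed

definition basis_ket :: "nat \<Rightarrow> nat \<Rightarrow> complex" where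
  "basis_ket x = (\<lambda>j. if j = x then 1 else 0)"

definition fourier_ket :: "nat \<Rightarrow> nat \<Rightarrow> complex" where
  "fourier_ket x = (\<lambda>j. \<i> ^ (x * j) / 2)"

lemma proj_meas4_basis_ket: "proj_meas4 {..<4} (\<lambda>x. ketbra (basis_ket x))"
  by (rule proj_meas4_ketbra)
    (auto simp: basis_ket_def if_distrib[of cnj] if_distrib[of "\<lambda>z. z * _"] cong: if_cong)

lemma proj_meas4_fourier_ket: "proj_meas4 {..<4} (\<lambda>x. ketbra (fourier_ket x))"
proof (rule proj_meas4_ketbra)
  fix x :: nat
  have "cnj (\<i> ^ (x * j)) * \<i> ^ (x * j) = 1" for j
    by (metis complex_norm_square mult.commute norm_ii norm_power power_one of_real_1)
  then show "(\<Sum>j<4. cnj (fourier_ket x j) * fourier_ket x j) = 1"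
    by (simp add: fourier_ket_def)
next
  fix i k :: nat
  assume "i < 4" "k < 4"
  have "4 dvd (3 * k + i) \<longleftrightarrow> i = k"
  proof
    assume "4 dvd (3 * k + i)"
    then have "(3 * k + i) mod 4 = (3 * k + k) mod 4" by simp
    then show "i = k" using \<open>i < 4\<close> \<open>k < 4\<close> by (rule add_mod_eq_cancel_left[rotated 2])
  qed simp
  moreover have summand: "fourier_ket x i * cnj (fourier_ket x k) = \<i> ^ (x * (3 * k + i)) / 4" for x
    by (simp add: fourier_ket_def minus_i_power power_add algebra_simps)
  ultimately show "(\<Sum>x<4. fourier_ket x i * cnj (fourier_ket x k)) = (if i = k then 1 else 0)"
    unfolding summand sum_divide_distrib[symmetric] sum_i_power_mult by simp
qed simp

lemma amplitude_basis_ket: "x < 4 \<Longrightarrow> y < 4 \<Longrightarrow> amplitude (basis_ket x) (basis_ket y) v = v x y"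
  unfolding amplitude_def basis_ket_def
  by (simp add: if_distrib[of cnj] mult.assoc sum_distrib_left[symmetric] cong: if_cong)
    (simp add: if_distrib[of "\<lambda>z. z * _"] cong: if_cong)

lemma amplitude_bell:
  "amplitude \<alpha> \<beta> (bell n m) = (\<Sum>j<4. cnj (\<alpha> j) * cnj (\<beta> ((j + m) mod 4)) * \<i> ^ (j * n)) / 2"
  by (simp add: amplitude_def bell_eq_i_power sum_divide_distrib if_distrib cong: if_cong)

text \<open>Here \<open>3 * x\<close> stands for \<open>-x\<close> modulo 4, avoiding subtraction on \<open>nat\<close>.\<close>

lemma amplitude_fourier_ket_bell:
  "amplitude (fourier_ket x) (fourier_ket y) (bell n m) =
     (if 4 dvd (3 * x + 3 * y + n) then \<i> ^ (3 * y * m) / 2 else 0)"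
proof -
  let ?k = "3 * x + 3 * y + n"
  have summand: "cnj (fourier_ket x j) * cnj (fourier_ket y ((j + m) mod 4)) * \<i> ^ (j * n) =
      \<i> ^ (3 * y * m) * \<i> ^ (j * ?k) / 4" for j
  proof -
    have "\<i> ^ (y * ((j + m) mod 4)) = \<i> ^ (y * (j + m))"
      by (metis i_power_mod4 mod_mult_right_eq)
    then show ?thesis
      by (simp add: fourier_ket_def minus_i_power power_add power_mult_distrib algebra_simps)
  qed
  have "amplitude (fourier_ket x) (fourier_ket y) (bell n m) =
      (\<Sum>j<4. \<i> ^ (3 * y * m) * \<i> ^ (j * ?k) / 4) / 2"
    unfolding amplitude_bell summand ..
  also have "\<dots> = \<i> ^ (3 * y * m) * (\<Sum>j<4. \<i> ^ (j * ?k)) / 8"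
    by (simp add: sum_distrib_left sum_divide_distrib)
  also have "\<dots> = (if 4 dvd ?k then \<i> ^ (3 * y * m) / 2 else 0)"
    by (simp add: sum_i_power_mult)
  finally show ?thesis .
qed

lemma oneway_A_to_B_bell_shifts: "oneway_A_to_B ((\<lambda>m. bell (N m) m) ` {..<4})"
proof (rule oneway_A_to_B_product_measurement[OF proj_meas4_basis_ket proj_meas4_basis_ket])
  fix x y u v
  assume "x \<in> {..<4}" "y \<in> {..<4}"
    and "u \<in> (\<lambda>m. bell (N m) m) ` {..<4}" "v \<in> (\<lambda>m. bell (N m) m) ` {..<4}"
    and "amplitude (basis_ket x) (basis_ket y) u \<noteq> 0" "amplitude (basis_ket x) (basis_ket y) v \<noteq> 0"
  then obtain m m'
    where m: "m < 4" "m' < 4" and uv: "u = bell (N m) m" "v = bell (N m') m'"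
    and "y = (x + m) mod 4" "y = (x + m') mod 4"
    by (auto simp: amplitude_basis_ket dest!: bell_nonzero_imp_shift)
  then have "(x + m) mod 4 = (x + m') mod 4" by simp
  with m have "m = m'" by (rule add_mod_eq_cancel_left)
  with uv show "u = v" by simp
qed

lemma oneway_A_to_B_bell_phases: "oneway_A_to_B ((\<lambda>n. bell n (M n)) ` {..<4})"
proof (rule oneway_A_to_B_product_measurement[OF proj_meas4_fourier_ket proj_meas4_fourier_ket])
  fix x y u v
  assume "u \<in> (\<lambda>n. bell n (M n)) ` {..<4}" "v \<in> (\<lambda>n. bell n (M n)) ` {..<4}"
    and "amplitude (fourier_ket x) (fourier_ket y) u \<noteq> 0"
      "amplitude (fourier_ket x) (fourier_ket y) v \<noteq> 0"
  then obtain n n'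
    where n: "n < 4" "n' < 4" and uv: "u = bell n (M n)" "v = bell n' (M n')"
    and phase: "(3 * x + 3 * y + n) mod 4 = (3 * x + 3 * y + n') mod 4"
    by (auto simp: amplitude_fourier_ket_bell dvd_eq_mod_eq_0 split: if_splits)
  from n phase have "n = n'" by (rule add_mod_eq_cancel_left)
  with uv show "u = v" by simp
qed

theorem theorem2:
  fixes a b c d :: nat
  assumes "a < 4" "b < 4" "c < 4" "d < 4"
  shows "oneway_proj_LOCC_discr {bell a 0, bell b 1, bell c 2, bell d 3} \<and>
         oneway_proj_LOCC_discr {bell 0 a, bell 1 b, bell 2 c, bell 3 d}"
proof -
  have "{..<4} = {0, 1, 2, 3 :: nat}" by auto
  then have "{bell a 0, bell b 1, bell c 2, bell d 3} = (\<lambda>m. bell ([a, b, c, d] ! m) m) ` {..<4}"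
    and "{bell 0 a, bell 1 b, bell 2 c, bell 3 d} = (\<lambda>n. bell n ([a, b, c, d] ! n)) ` {..<4}"
    by simp_all
  then show ?thesis
    unfolding oneway_proj_LOCC_discr_def
    using oneway_A_to_B_bell_shifts oneway_A_to_B_bell_phases by simp
qed

end
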